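(* Let $F$ be a field of characteristic different from $2$ and $3$ such that $F^2=F$. Let $K_{10}=F\cdot 1\oplus(K_3\otimes K_3)$ be the Kac Jordan superalgebra in the realization described in the context, with $W=(K_3)_{\bar 1}$. Let $G=Sp(W)\wr C_2=(Sp(W)\times Sp(W))\rtimes C_2$, where $C_2=\{1,\epsilon\}$ and $(f,g)\epsilon=\epsilon(g,f)$. Let $\Phi\colon G\to\mathrm{Aut}(K_{10})$ be the group homomorphism determined by: for $(f,g)\in Sp(W)\times Sp(W)$, $\Phi_{(f,g)}(1)=1$ and $\Phi_{(f,g)}(a\otimes b)=\tilde f(a)\otimes\tilde g(b)$, where for $h\in Sp(W)$, $\tilde h$ is the automorphism of $K_3$ with $\tilde h(e)=e$ and $\tilde h(w)=h(w)$ for $w\in W$; and $\Phi(\epsilon)=\delta$, where $\delta(1)=1$ and $\delta(a\otimes b)=(-1)^{\bar a\bar b}\,b\otimes a$ for homogeneous $a,b\in K_3$. Then $\Phi$ is a group isomorphism; in particular $\mathrm{Aut}(K_{10})\cong Sp(W)\wr C_2$.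
   Context: The Kaplansky superalgebra $K_3$ has even part $Fe$ and odd part $W=Fx+Fy$, with products $e^2=e$, $e x=xe=\tfrac12 x$, $e y=ye=\tfrac12 y$, $xy=e$, $yx=-e$, $x^2=y^2=0$. It carries the supersymmetric bilinear form with $(e|e)=\tfrac12$, $(x|y)=1$, $(y|x)=-1$, $(x|x)=(y|y)=0$, and even and odd parts orthogonal. $Sp(W)$ is the group of linear maps of $W$ preserving the alternating form $(\,\cdot\,|\,\cdot\,)|_{W}$. $K_{10}=F\cdot 1\oplus(K_3\otimes K_3)$ is the superalgebra in which $1$ is an even identity element, $a\otimes b$ (for homogeneous $a,b\in K_3$) has parity $\bar a+\bar b$, and $(a\otimes b)(c\otimes d)=(-1)^{\bar b\bar c}\bigl(ac\otimes bd-\tfrac34(a|c)(b|d)1\bigr)$ for homogeneous $a,b,c,d\in K_3$; this is (isomorphic to) the $10$-dimensional Kac Jordan superalgebra. $\mathrm{Aut}(K_{10})$ denotes the group of automorphisms of graded algebras. *)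

theory Defs
  imports "HOL-Algebra.Group"
begin

text \<open>Basis e, x, y of K3; elements of K3 are coordinate vectors idx3 => 'a.\<close>
datatype idx3 = E | X | Y

lemma UNIV_idx3: "(UNIV :: idx3 set) = {E, X, Y}"
  using idx3.exhaust by auto

instance idx3 :: finite
  by standard (simp add: UNIV_idx3)

fun odd3 :: "idx3 \<Rightarrow> bool" where
  "odd3 E = False" | "odd3 X = True" | "odd3 Y = True"

definition unit3 :: "idx3 \<Rightarrow> idx3 \<Rightarrow> 'a::field" where
  "unit3 k = (\<lambda>i. if i = k then 1 else 0)"

fun k3m :: "idx3 \<Rightarrow> idx3 \<Rightarrow> (idx3 \<Rightarrow> 'a::field)" where
  "k3m E E = unit3 E"
| "k3m E X = (\<lambda>i. (1/2) * unit3 X i)"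
| "k3m X E = (\<lambda>i. (1/2) * unit3 X i)"
| "k3m E Y = (\<lambda>i. (1/2) * unit3 Y i)"
| "k3m Y E = (\<lambda>i. (1/2) * unit3 Y i)"
| "k3m X Y = unit3 E"
| "k3m Y X = (\<lambda>i. - unit3 E i)"
| "k3m X X = (\<lambda>i. 0)"
| "k3m Y Y = (\<lambda>i. 0)"

fun bf3 :: "idx3 \<Rightarrow> idx3 \<Rightarrow> 'a::field" where
  "bf3 E E = 1/2"
| "bf3 X Y = 1"
| "bf3 Y X = -1"
| "bf3 _ _ = 0"

definition sgn3 :: "idx3 \<Rightarrow> idx3 \<Rightarrow> 'a::field" where
  "sgn3 b c = (if odd3 b \<and> odd3 c then -1 else 1)"

text \<open>An element (c, M) stands for c 1 + sum_{k,l} M k l (b_k (x) b_l).\<close>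
type_synonym 'a k10 = "'a \<times> (idx3 \<Rightarrow> idx3 \<Rightarrow> 'a)"

definition k10_add :: "'a::field k10 \<Rightarrow> 'a k10 \<Rightarrow> 'a k10" where
  "k10_add u v = (fst u + fst v, \<lambda>i j. snd u i j + snd v i j)"

definition k10_scale :: "'a::field \<Rightarrow> 'a k10 \<Rightarrow> 'a k10" where
  "k10_scale t u = (t * fst u, \<lambda>i j. t * snd u i j)"

text \<open>Bilinear product: 1 is the identity and
  (a(x)b)(c(x)d) = (-1)^(b c) (ac (x) bd - 3/4 (a|c)(b|d) 1).\<close>
definition k10_mult :: "'a::field k10 \<Rightarrow> 'a k10 \<Rightarrow> 'a k10" where
  "k10_mult u v =
    (fst u * fst v +
       (\<Sum>k\<in>UNIV. \<Sum>l\<in>UNIV. \<Sum>m\<in>UNIV. \<Sum>n\<in>UNIV.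
          snd u k l * snd v m n * sgn3 l m * (- (3/4) * bf3 k m * bf3 l n)),
     \<lambda>i j. fst u * snd v i j + fst v * snd u i j +
       (\<Sum>k\<in>UNIV. \<Sum>l\<in>UNIV. \<Sum>m\<in>UNIV. \<Sum>n\<in>UNIV.
          snd u k l * snd v m n * sgn3 l m * (k3m k m i * k3m l n j)))"

definition k10_even :: "'a::field k10 \<Rightarrow> bool" where
  "k10_even u = (\<forall>i j. odd3 i \<noteq> odd3 j \<longrightarrow> snd u i j = 0)"

definition k10_odd :: "'a::field k10 \<Rightarrow> bool" where
  "k10_odd u = (fst u = 0 \<and> (\<forall>i j. odd3 i = odd3 j \<longrightarrow> snd u i j = 0))"

definition is_aut_k10 :: "('a::field k10 \<Rightarrow> 'a k10) \<Rightarrow> bool" where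
  "is_aut_k10 \<phi> \<longleftrightarrow> bij \<phi>
     \<and> (\<forall>u v. \<phi> (k10_add u v) = k10_add (\<phi> u) (\<phi> v))
     \<and> (\<forall>t u. \<phi> (k10_scale t u) = k10_scale t (\<phi> u))
     \<and> (\<forall>u v. \<phi> (k10_mult u v) = k10_mult (\<phi> u) (\<phi> v))
     \<and> (\<forall>u. k10_even u \<longrightarrow> k10_even (\<phi> u))
     \<and> (\<forall>u. k10_odd u \<longrightarrow> k10_odd (\<phi> u))"

definition Aut_K10 :: "('a::field k10 \<Rightarrow> 'a k10) monoid" where
  "Aut_K10 = \<lparr>carrier = {\<phi>. is_aut_k10 \<phi>}, mult = (\<circ>), one = id\<rparr>"

text \<open>W = F x + F y, an element (a,b) stands for a x + b y; (x|y) = 1.\<close>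
type_synonym 'a W = "'a \<times> 'a"

definition wform :: "'a::field W \<Rightarrow> 'a W \<Rightarrow> 'a" where
  "wform u v = fst u * snd v - snd u * fst v"

definition Sp :: "('a::field W \<Rightarrow> 'a W) set" where
  "Sp = {h. (\<forall>u v. h (fst u + fst v, snd u + snd v) = (fst (h u) + fst (h v), snd (h u) + snd (h v)))
          \<and> (\<forall>t u. h (t * fst u, t * snd u) = (t * fst (h u), t * snd (h u)))
          \<and> (\<forall>u v. wform (h u) (h v) = wform u v)}"

text \<open>(f, g, s) stands for (f,g) eps^s; eps (f,g) eps = (g,f).\<close>
definition wreath_mult ::
  "('a W \<Rightarrow> 'a W) \<times> ('a W \<Rightarrow> 'a W) \<times> bool \<Rightarrow> ('a W \<Rightarrow> 'a W) \<times> ('a W \<Rightarrow> 'a W) \<times> bool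
   \<Rightarrow> ('a W \<Rightarrow> 'a W) \<times> ('a W \<Rightarrow> 'a W) \<times> bool" where
  "wreath_mult p q = (case p of (f, g, s) \<Rightarrow> case q of (f', g', s') \<Rightarrow>
     if s then (f \<circ> g', g \<circ> f', \<not> s') else (f \<circ> f', g \<circ> g', s'))"

definition SpWrC2 :: "(('a::field W \<Rightarrow> 'a W) \<times> ('a W \<Rightarrow> 'a W) \<times> bool) monoid" where
  "SpWrC2 = \<lparr>carrier = {(f, g, s). f \<in> Sp \<and> g \<in> Sp}, mult = wreath_mult, one = (id, id, False)\<rparr>"

definition tilde :: "('a::field W \<Rightarrow> 'a W) \<Rightarrow> (idx3 \<Rightarrow> 'a) \<Rightarrow> (idx3 \<Rightarrow> 'a)" where
  "tilde h v = (\<lambda>i. case i of E \<Rightarrow> v E | X \<Rightarrow> fst (h (v X, v Y)) | Y \<Rightarrow> snd (h (v X, v Y)))"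

text \<open>Linear extension of 1 |-> 1, a (x) b |-> tilde f a (x) tilde g b.\<close>
definition Phi_pair :: "('a::field W \<Rightarrow> 'a W) \<Rightarrow> ('a W \<Rightarrow> 'a W) \<Rightarrow> 'a k10 \<Rightarrow> 'a k10" where
  "Phi_pair f g u = (fst u, \<lambda>i j. \<Sum>k\<in>UNIV. \<Sum>l\<in>UNIV.
      snd u k l * (tilde f (unit3 k) i * tilde g (unit3 l) j))"

definition delta :: "'a::field k10 \<Rightarrow> 'a k10" where
  "delta u = (fst u, \<lambda>i j. sgn3 j i * snd u j i)"

definition Phi :: "('a::field W \<Rightarrow> 'a W) \<times> ('a W \<Rightarrow> 'a W) \<times> bool \<Rightarrow> 'a k10 \<Rightarrow> 'a k10" where
  "Phi p = (case p of (f, g, s) \<Rightarrow> if s then Phi_pair f g \<circ> delta else Phi_pair f g)"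

end

theory Submission
  imports Defs
begin

text \<open>
  An automorphism \<open>\<phi>\<close> of \<open>K\<^sub>1\<^sub>0\<close> fixes \<open>1\<close>, and it fixes the even idempotent
  \<open>p\<^sub>1 = 2 e\<otimes>e - 1/2\<close>: the even idempotents acting as \<open>1/2\<close> on the odd part are only
  \<open>p\<^sub>1\<close> and \<open>p\<^sub>2 = 1 - p\<^sub>1\<close>, and \<open>\<phi>\<close> cannot swap them because the annihilator of \<open>p\<^sub>1\<close> in the
  even part contains \<open>x\<otimes>x\<close>, while that of \<open>p\<^sub>2\<close> is the line through \<open>p\<^sub>1\<close>. Hence \<open>\<phi>\<close> fixes
  \<open>z = e\<otimes>e - 3/8 = p\<^sub>1/2 - 1/8\<close>. Two odd elements with product \<open>z\<close> lie both in \<open>e\<otimes>W\<close> or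
  both in \<open>W\<otimes>e\<close> and have symplectic product \<open>1\<close> there. Applied to \<open>(e\<otimes>x, e\<otimes>y)\<close> and to
  \<open>(x\<otimes>e, y\<otimes>e)\<close>, and since \<open>(e\<otimes>x)(x\<otimes>e)\<close> is not a multiple of \<open>z\<close>, this shows that \<open>\<phi>\<close>
  either preserves or swaps \<open>e\<otimes>W\<close> and \<open>W\<otimes>e\<close>, acting on them by symplectic maps \<open>g\<close> and \<open>f\<close>.
  As these four odd elements generate \<open>K\<^sub>1\<^sub>0\<close>, \<open>\<phi>\<close> is \<open>\<Phi>(f, g)\<close> or \<open>\<Phi>(f, g) \<circ> \<delta>\<close>.
\<close>

section \<open>Coordinates\<close>

lemma all_idx3: "(\<forall>i. P i) \<longleftrightarrow> P E \<and> P X \<and> P Y"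
  by (metis idx3.exhaust)

definition k10_vec :: "'a::field \<Rightarrow> 'a \<Rightarrow> 'a \<Rightarrow> 'a \<Rightarrow> 'a \<Rightarrow> 'a \<Rightarrow> 'a \<Rightarrow> 'a \<Rightarrow> 'a \<Rightarrow> 'a \<Rightarrow> 'a k10" where
  "k10_vec c ee ex ey xe xx xy ye yx yy = (c, \<lambda>i j. case (i, j) of
      (E, E) \<Rightarrow> ee | (E, X) \<Rightarrow> ex | (E, Y) \<Rightarrow> ey
    | (X, E) \<Rightarrow> xe | (X, X) \<Rightarrow> xx | (X, Y) \<Rightarrow> xy
    | (Y, E) \<Rightarrow> ye | (Y, X) \<Rightarrow> yx | (Y, Y) \<Rightarrow> yy)"

lemma k10_vec_eq_iff:
  "k10_vec c ee ex ey xe xx xy ye yx yy = k10_vec c' ee' ex' ey' xe' xx' xy' ye' yx' yy' \<longleftrightarrow>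
    c = c' \<and> ee = ee' \<and> ex = ex' \<and> ey = ey' \<and> xe = xe' \<and> xx = xx' \<and> xy = xy' \<and>
    ye = ye' \<and> yx = yx' \<and> yy = yy'"
  by (auto simp: k10_vec_def fun_eq_iff all_idx3)

lemma k10_vec_cases:
  obtains c ee ex ey xe xx xy ye yx yy where "u = k10_vec c ee ex ey xe xx xy ye yx yy"
proof
  show "u = k10_vec (fst u) (snd u E E) (snd u E X) (snd u E Y) (snd u X E) (snd u X X)
      (snd u X Y) (snd u Y E) (snd u Y X) (snd u Y Y)"
    by (simp add: k10_vec_def prod_eq_iff fun_eq_iff all_idx3)
qed

lemma k10_add_vec:
  "k10_add (k10_vec c ee ex ey xe xx xy ye yx yy) (k10_vec c' ee' ex' ey' xe' xx' xy' ye' yx' yy') =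
    k10_vec (c + c') (ee + ee') (ex + ex') (ey + ey') (xe + xe') (xx + xx') (xy + xy')
      (ye + ye') (yx + yx') (yy + yy')"
  by (simp add: k10_add_def k10_vec_def fun_eq_iff all_idx3)

lemma k10_scale_vec:
  "k10_scale t (k10_vec c ee ex ey xe xx xy ye yx yy) =
    k10_vec (t * c) (t * ee) (t * ex) (t * ey) (t * xe) (t * xx) (t * xy) (t * ye) (t * yx) (t * yy)"
  by (simp add: k10_scale_def k10_vec_def fun_eq_iff all_idx3)

lemma k10_mult_vec:
  "k10_mult (k10_vec c ee ex ey xe xx xy ye yx yy) (k10_vec c' ee' ex' ey' xe' xx' xy' ye' yx' yy') =
    k10_vec
      (c * c' - 3/16 * ee * ee' + 3/8 * ((ex' * ey - ex * ey') + (xe' * ye - xe * ye'))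
         + 3/4 * (xx * yy' + xx' * yy - xy * yx' - xy' * yx))
      (c * ee' + c' * ee + ee * ee' + (ex * ey' - ex' * ey) + (xe * ye' - xe' * ye)
         + (xy * yx' + xy' * yx - xx * yy' - xx' * yy))
      (c * ex' + c' * ex + (ee * ex' + ee' * ex + (xe * yx' + xe' * yx - xx * ye' - xx' * ye)) / 2)
      (c * ey' + c' * ey + (ee * ey' + ee' * ey + (xe * yy' + xe' * yy - xy * ye' - xy' * ye)) / 2)
      (c * xe' + c' * xe + (ee * xe' + ee' * xe + (ey * xx' + ey' * xx - ex * xy' - ex' * xy)) / 2)
      (c * xx' + c' * xx + (ee * xx' + ee' * xx + ex' * xe - ex * xe') / 4)
      (c * xy' + c' * xy + (ee * xy' + ee' * xy + ey' * xe - ey * xe') / 4)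
      (c * ye' + c' * ye + (ee * ye' + ee' * ye + (ey * yx' + ey' * yx - ex * yy' - ex' * yy)) / 2)
      (c * yx' + c' * yx + (ee * yx' + ee' * yx + ex' * ye - ex * ye') / 4)
      (c * yy' + c' * yy + (ee * yy' + ee' * yy + ey' * ye - ey * ye') / 4)"
  unfolding k10_mult_def k10_vec_def prod_eq_iff fun_eq_iff all_idx3
  by (simp add: UNIV_idx3 sgn3_def unit3_def add_divide_distrib diff_divide_distrib algebra_simps)

lemma delta_vec:
  "delta (k10_vec c ee ex ey xe xx xy ye yx yy) = k10_vec c ee xe ye ex (- xx) (- yx) ey (- xy) (- yy)"
  by (simp add: delta_def k10_vec_def sgn3_def fun_eq_iff all_idx3)

lemma k10_even_vec:
  "k10_even (k10_vec c ee ex ey xe xx xy ye yx yy) \<longleftrightarrow> ex = 0 \<and> ey = 0 \<and> xe = 0 \<and> ye = 0"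
  by (auto simp: k10_even_def k10_vec_def all_idx3)

lemma k10_odd_vec:
  "k10_odd (k10_vec c ee ex ey xe xx xy ye yx yy) \<longleftrightarrow>
    c = 0 \<and> ee = 0 \<and> xx = 0 \<and> xy = 0 \<and> yx = 0 \<and> yy = 0"
  by (auto simp: k10_odd_def k10_vec_def all_idx3)

section \<open>The symplectic group and the map \<open>\<Phi>\<close>\<close>

definition lin2 :: "'a::field \<Rightarrow> 'a \<Rightarrow> 'a \<Rightarrow> 'a \<Rightarrow> 'a W \<Rightarrow> 'a W" where
  "lin2 a b c d = (\<lambda>u. (a * fst u + b * snd u, c * fst u + d * snd u))"

lemma lin2_apply: "lin2 a b c d w = (a * fst w + b * snd w, c * fst w + d * snd w)"
  by (simp add: lin2_def)

lemma lin2_comp: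
  "lin2 a b c d \<circ> lin2 a' b' c' d' =
    lin2 (a * a' + b * c') (a * b' + b * d') (c * a' + d * c') (c * b' + d * d')"
  by (simp add: lin2_def fun_eq_iff algebra_simps)

lemma lin2_in_Sp: "a * d - b * c = 1 \<Longrightarrow> lin2 a b c d \<in> Sp"
  by (simp add: Sp_def lin2_def wform_def algebra_simps)

lemma tilde_lin2_unit3:
  "tilde (lin2 a b c d) (unit3 k) i = (case (k, i) of
      (E, E) \<Rightarrow> 1 | (X, X) \<Rightarrow> a | (X, Y) \<Rightarrow> c | (Y, X) \<Rightarrow> b | (Y, Y) \<Rightarrow> d | _ \<Rightarrow> 0)"
  by (cases k; cases i; simp add: tilde_def lin2_def unit3_def)

lemma Phi_pair_lin2_vec:
  "Phi_pair (lin2 a b c d) (lin2 a' b' c' d') (k10_vec t ee ex ey xe xx xy ye yx yy) =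
    k10_vec t ee (a' * ex + b' * ey) (c' * ex + d' * ey) (a * xe + b * ye)
      (a * a' * xx + a * b' * xy + b * a' * yx + b * b' * yy)
      (a * c' * xx + a * d' * xy + b * c' * yx + b * d' * yy)
      (c * xe + d * ye)
      (c * a' * xx + c * b' * xy + d * a' * yx + d * b' * yy)
      (c * c' * xx + c * d' * xy + d * c' * yx + d * d' * yy)"
  unfolding Phi_pair_def k10_vec_def prod_eq_iff fun_eq_iff all_idx3
  by (simp add: UNIV_idx3 tilde_lin2_unit3 algebra_simps)

lemma Sp_lin2E:
  assumes "h \<in> Sp"
  obtains a b c d where "h = lin2 a b c d" and "a * d - b * c = 1"
proof
  have add: "\<And>u v. h (fst u + fst v, snd u + snd v) = (fst (h u) + fst (h v), snd (h u) + snd (h v))"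
    and scale: "\<And>t u. h (t * fst u, t * snd u) = (t * fst (h u), t * snd (h u))"
    and form: "\<And>u v. wform (h u) (h v) = wform u v"
    using assms unfolding Sp_def by blast+
  define a b c d where "a = fst (h (1, 0))" and "b = fst (h (0, 1))"
    and "c = snd (h (1, 0))" and "d = snd (h (0, 1))"
  have "h (p, q) = (a * p + b * q, c * p + d * q)" for p q
    using add[of "(p, 0)" "(0, q)"] scale[of p "(1, 0)"] scale[of q "(0, 1)"]
    by (simp add: a_def b_def c_def d_def algebra_simps)
  then show "h = lin2 a b c d"
    by (simp add: fun_eq_iff lin2_def)
  show "a * d - b * c = 1"
    using form[of "(1, 0)" "(0, 1)"] by (simp add: wform_def a_def b_def c_def d_def mult.commute)
qed

text \<open>
  For arbitrary linear maps, \<open>Phi_pair\<close> carries the product in which the form on the left (right)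
  copy of \<open>W\<close> is scaled by the determinant \<open>s\<close> (\<open>t\<close>) to the product of \<open>K\<^sub>1\<^sub>0\<close>. The terms of
  k10_mult_vec are grouped so that it is literally the instance \<open>s = t = 1\<close>.
\<close>
lemma k10_mult_Phi_pair_lin2_vec:
  assumes "a * d - b * c = s" and "a' * d' - b' * c' = t"
  shows "k10_mult
      (Phi_pair (lin2 a b c d) (lin2 a' b' c' d') (k10_vec c0 ee ex ey xe xx xy ye yx yy))
      (Phi_pair (lin2 a b c d) (lin2 a' b' c' d') (k10_vec c0' ee' ex' ey' xe' xx' xy' ye' yx' yy')) =
    Phi_pair (lin2 a b c d) (lin2 a' b' c' d') (k10_vec
      (c0 * c0' - 3/16 * ee * ee' + 3/8 * (t * (ex' * ey - ex * ey') + s * (xe' * ye - xe * ye'))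
         + 3/4 * s * t * (xx * yy' + xx' * yy - xy * yx' - xy' * yx))
      (c0 * ee' + c0' * ee + ee * ee' + t * (ex * ey' - ex' * ey) + s * (xe * ye' - xe' * ye)
         + s * t * (xy * yx' + xy' * yx - xx * yy' - xx' * yy))
      (c0 * ex' + c0' * ex + (ee * ex' + ee' * ex + s * (xe * yx' + xe' * yx - xx * ye' - xx' * ye)) / 2)
      (c0 * ey' + c0' * ey + (ee * ey' + ee' * ey + s * (xe * yy' + xe' * yy - xy * ye' - xy' * ye)) / 2)
      (c0 * xe' + c0' * xe + (ee * xe' + ee' * xe + t * (ey * xx' + ey' * xx - ex * xy' - ex' * xy)) / 2)
      (c0 * xx' + c0' * xx + (ee * xx' + ee' * xx + ex' * xe - ex * xe') / 4)
      (c0 * xy' + c0' * xy + (ee * xy' + ee' * xy + ey' * xe - ey * xe') / 4)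
      (c0 * ye' + c0' * ye + (ee * ye' + ee' * ye + t * (ey * yx' + ey' * yx - ex * yy' - ex' * yy)) / 2)
      (c0 * yx' + c0' * yx + (ee * yx' + ee' * yx + ex' * ye - ex * ye') / 4)
      (c0 * yy' + c0' * yy + (ee * yy' + ee' * yy + ey' * ye - ey * ye') / 4))"
  unfolding k10_mult_vec Phi_pair_lin2_vec k10_vec_eq_iff assms[symmetric]
  by (intro conjI) (simp_all add: add_divide_distrib diff_divide_distrib algebra_simps)

lemma Phi_pair_lin2_mult:
  assumes "a * d - b * c = 1" and "a' * d' - b' * c' = 1"
  shows "Phi_pair (lin2 a b c d) (lin2 a' b' c' d') (k10_mult u v) =
    k10_mult (Phi_pair (lin2 a b c d) (lin2 a' b' c' d') u) (Phi_pair (lin2 a b c d) (lin2 a' b' c' d') v)"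
proof -
  obtain c0 ee ex ey xe xx xy ye yx yy where u: "u = k10_vec c0 ee ex ey xe xx xy ye yx yy"
    by (rule k10_vec_cases)
  obtain c0' ee' ex' ey' xe' xx' xy' ye' yx' yy' where v: "v = k10_vec c0' ee' ex' ey' xe' xx' xy' ye' yx' yy'"
    by (rule k10_vec_cases)
  show ?thesis
    using k10_mult_Phi_pair_lin2_vec[OF assms, of c0 ee ex ey xe xx xy ye yx yy]
    by (simp only: u v mult_1_left mult_1_right k10_mult_vec)
qed

lemma lin2_id: "lin2 1 0 0 1 = id"
  by (simp add: lin2_def fun_eq_iff)

lemma Sp_inverseE:
  assumes "f \<in> Sp"
  obtains f' where "f' \<in> Sp" and "f \<circ> f' = id" and "f' \<circ> f = id"
proof -
  obtain a b c d where f: "f = lin2 a b c d" and det: "a * d - b * c = 1"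
    using assms by (rule Sp_lin2E)
  show ?thesis
  proof
    show "lin2 d (- b) (- c) a \<in> Sp"
      using det by (intro lin2_in_Sp) (simp add: algebra_simps)
    have "f \<circ> lin2 d (- b) (- c) a = lin2 (a * d - b * c) 0 0 (a * d - b * c)"
      and "lin2 d (- b) (- c) a \<circ> f = lin2 (a * d - b * c) 0 0 (a * d - b * c)"
      by (simp_all add: f lin2_comp algebra_simps)
    then show "f \<circ> lin2 d (- b) (- c) a = id" and "lin2 d (- b) (- c) a \<circ> f = id"
      by (simp_all add: det lin2_id)
  qed
qed

lemma Phi_pair_lin2_Phi_pair_lin2:
  "Phi_pair (lin2 a b c d) (lin2 a' b' c' d') (Phi_pair (lin2 p q r s) (lin2 p' q' r' s') u) =
    Phi_pair (lin2 a b c d \<circ> lin2 p q r s) (lin2 a' b' c' d' \<circ> lin2 p' q' r' s') u"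
  by (cases u rule: k10_vec_cases) (simp add: lin2_comp Phi_pair_lin2_vec k10_vec_eq_iff algebra_simps)

lemma Phi_pair_Phi_pair:
  assumes "f \<in> Sp" "g \<in> Sp" "f' \<in> Sp" "g' \<in> Sp"
  shows "Phi_pair f g (Phi_pair f' g' u) = Phi_pair (f \<circ> f') (g \<circ> g') u"
  using assms by (elim Sp_lin2E) (simp only: Phi_pair_lin2_Phi_pair_lin2)

lemma Phi_pair_id: "Phi_pair id id u = u"
  by (cases u rule: k10_vec_cases) (simp add: Phi_pair_lin2_vec flip: lin2_id)

lemma delta_delta: "delta (delta u) = u"
  by (cases u rule: k10_vec_cases) (simp add: delta_vec)

lemma delta_Phi_pair:
  assumes "f \<in> Sp" and "g \<in> Sp"
  shows "delta (Phi_pair f g u) = Phi_pair g f (delta u)"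
proof -
  obtain a b c d where "f = lin2 a b c d"
    using assms(1) by (rule Sp_lin2E)
  moreover obtain a' b' c' d' where "g = lin2 a' b' c' d'"
    using assms(2) by (rule Sp_lin2E)
  ultimately show ?thesis
    by (cases u rule: k10_vec_cases) (simp add: delta_vec Phi_pair_lin2_vec k10_vec_eq_iff)
qed

lemma is_aut_k10_Phi_pair:
  assumes f: "f \<in> Sp" and g: "g \<in> Sp"
  shows "is_aut_k10 (Phi_pair f g)"
proof -
  obtain a b c d where f_eq: "f = lin2 a b c d" and det: "a * d - b * c = 1"
    using f by (rule Sp_lin2E)
  obtain a' b' c' d' where g_eq: "g = lin2 a' b' c' d'" and det': "a' * d' - b' * c' = 1"
    using g by (rule Sp_lin2E)
  obtain f' g' where "f' \<in> Sp" "g' \<in> Sp"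
    and "f \<circ> f' = id" "f' \<circ> f = id" "g \<circ> g' = id" "g' \<circ> g = id"
    using f g by (metis Sp_inverseE)
  then have "Phi_pair f g (Phi_pair f' g' u) = u" "Phi_pair f' g' (Phi_pair f g u) = u" for u
    using f g by (simp_all add: Phi_pair_Phi_pair Phi_pair_id)
  then have "bij (Phi_pair f g)"
    by (intro o_bij[of "Phi_pair f' g'"]) (simp_all add: fun_eq_iff)
  moreover have "Phi_pair f g (k10_add u v) = k10_add (Phi_pair f g u) (Phi_pair f g v)"
    and "Phi_pair f g (k10_scale t u) = k10_scale t (Phi_pair f g u)"
    and "k10_even u \<Longrightarrow> k10_even (Phi_pair f g u)"
    and "k10_odd u \<Longrightarrow> k10_odd (Phi_pair f g u)" for u v t
    by (cases u rule: k10_vec_cases; cases v rule: k10_vec_cases;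
        simp add: f_eq g_eq Phi_pair_lin2_vec k10_add_vec k10_scale_vec k10_even_vec k10_odd_vec
          k10_vec_eq_iff algebra_simps)+
  ultimately show ?thesis
    by (simp add: is_aut_k10_def f_eq g_eq Phi_pair_lin2_mult det det')
qed

lemma delta_mult: "delta (k10_mult u v) = k10_mult (delta u) (delta v)"
proof -
  obtain c0 ee ex ey xe xx xy ye yx yy where u: "u = k10_vec c0 ee ex ey xe xx xy ye yx yy"
    by (rule k10_vec_cases)
  obtain c0' ee' ex' ey' xe' xx' xy' ye' yx' yy' where v: "v = k10_vec c0' ee' ex' ey' xe' xx' xy' ye' yx' yy'"
    by (rule k10_vec_cases)
  show ?thesis
    unfolding u v delta_vec k10_mult_vec k10_vec_eq_iff
    by (intro conjI) (simp_all add: add_divide_distrib diff_divide_distrib algebra_simps)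
qed

lemma is_aut_k10_delta: "is_aut_k10 delta"
proof -
  have "bij delta"
    by (intro o_bij[of delta]) (simp_all add: fun_eq_iff delta_delta)
  moreover have "delta (k10_add u v) = k10_add (delta u) (delta v)"
    and "delta (k10_scale t u) = k10_scale t (delta u)"
    and "k10_even u \<Longrightarrow> k10_even (delta u)"
    and "k10_odd u \<Longrightarrow> k10_odd (delta u)" for u v t
    by (cases u rule: k10_vec_cases; cases v rule: k10_vec_cases;
        simp add: delta_vec k10_add_vec k10_scale_vec k10_mult_vec k10_even_vec k10_odd_vec
          k10_vec_eq_iff algebra_simps)+
  ultimately show ?thesis
    unfolding is_aut_k10_def using delta_mult by blast
qed

lemma is_aut_k10_comp: "is_aut_k10 \<phi> \<Longrightarrow> is_aut_k10 \<psi> \<Longrightarrow> is_aut_k10 (\<phi> \<circ> \<psi>)"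
  unfolding is_aut_k10_def by (simp add: bij_comp del: split_paired_All)

lemma Phi_is_aut_k10: "p \<in> carrier SpWrC2 \<Longrightarrow> is_aut_k10 (Phi p)"
  by (auto simp: SpWrC2_def Phi_def is_aut_k10_Phi_pair
      intro: is_aut_k10_comp[OF is_aut_k10_Phi_pair is_aut_k10_delta])

lemma Phi_wreath_mult:
  assumes "p \<in> carrier SpWrC2" and "q \<in> carrier SpWrC2"
  shows "Phi (wreath_mult p q) = Phi p \<circ> Phi q"
proof -
  obtain f g s f' g' s' where pq: "p = (f, g, s)" "q = (f', g', s')"
    and "f \<in> Sp" "g \<in> Sp" "f' \<in> Sp" "g' \<in> Sp"
    using assms by (auto simp: SpWrC2_def)
  then show ?thesis
    by (cases s; cases s')
      (simp_all add: pq wreath_mult_def Phi_def fun_eq_iff Phi_pair_Phi_pair delta_Phi_pair delta_delta)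
qed

section \<open>The subspaces \<open>e\<otimes>W\<close> and \<open>W\<otimes>e\<close>\<close>

definition e_tensor :: "'a::field W \<Rightarrow> 'a k10" where
  "e_tensor w = k10_vec 0 0 (fst w) (snd w) 0 0 0 0 0 0"

definition tensor_e :: "'a::field W \<Rightarrow> 'a k10" where
  "tensor_e w = k10_vec 0 0 0 0 (fst w) 0 0 (snd w) 0 0"

lemma e_tensor_eq_iff: "e_tensor v = e_tensor w \<longleftrightarrow> v = w"
  unfolding e_tensor_def k10_vec_eq_iff by (simp add: prod_eq_iff)

lemma tensor_e_eq_iff: "tensor_e v = tensor_e w \<longleftrightarrow> v = w"
  unfolding tensor_e_def k10_vec_eq_iff by (simp add: prod_eq_iff)

lemma e_tensor_eq_tensor_e_iff: "e_tensor v = tensor_e w \<longleftrightarrow> v = (0, 0) \<and> w = (0, 0)"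
  unfolding e_tensor_def tensor_e_def k10_vec_eq_iff by (auto simp: prod_eq_iff)

lemma tensor_e_eq_e_tensor_iff: "tensor_e v = e_tensor w \<longleftrightarrow> v = (0, 0) \<and> w = (0, 0)"
  using e_tensor_eq_tensor_e_iff[of w v] by auto

lemma Phi_pair_e_tensor_tensor_e:
  assumes "f \<in> Sp" and "g \<in> Sp"
  shows "Phi_pair f g (e_tensor w) = e_tensor (g w)" and "Phi_pair f g (tensor_e w) = tensor_e (f w)"
proof -
  obtain a b c d where f: "f = lin2 a b c d"
    using assms(1) by (rule Sp_lin2E)
  obtain a' b' c' d' where g: "g = lin2 a' b' c' d'"
    using assms(2) by (rule Sp_lin2E)
  show "Phi_pair f g (e_tensor w) = e_tensor (g w)" and "Phi_pair f g (tensor_e w) = tensor_e (f w)"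
    unfolding f g by (simp_all add: e_tensor_def tensor_e_def Phi_pair_lin2_vec lin2_apply)
qed

lemma delta_e_tensor: "delta (e_tensor w) = tensor_e w"
  by (simp add: e_tensor_def tensor_e_def delta_vec)

lemma delta_tensor_e: "delta (tensor_e w) = e_tensor w"
  by (simp add: e_tensor_def tensor_e_def delta_vec)

lemma Phi_e_tensor:
  "f \<in> Sp \<Longrightarrow> g \<in> Sp \<Longrightarrow>
    Phi (f, g, s) (e_tensor w) = (if s then tensor_e (f w) else e_tensor (g w))"
  by (simp add: Phi_def delta_e_tensor Phi_pair_e_tensor_tensor_e)

lemma Phi_tensor_e:
  "f \<in> Sp \<Longrightarrow> g \<in> Sp \<Longrightarrow>
    Phi (f, g, s) (tensor_e w) = (if s then e_tensor (g w) else tensor_e (f w))"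
  by (simp add: Phi_def delta_tensor_e Phi_pair_e_tensor_tensor_e)

lemma Sp_apply_x_nonzero:
  assumes "h \<in> Sp"
  shows "h (1, 0) \<noteq> (0, 0)"
proof
  assume "h (1, 0) = (0, 0)"
  moreover have "wform (h (1, 0)) (h (0, 1)) = wform (1, 0) (0, 1)"
    using assms by (simp add: Sp_def)
  ultimately show False
    by (simp add: wform_def)
qed

lemma inj_on_Phi: "inj_on Phi (carrier SpWrC2)"
proof
  fix p q assume "p \<in> carrier SpWrC2" "q \<in> carrier SpWrC2" and eq: "Phi p = Phi q"
  then obtain f g s f' g' s' where pq: "p = (f, g, s)" "q = (f', g', s')"
    and Sp: "f \<in> Sp" "g \<in> Sp" "f' \<in> Sp" "g' \<in> Sp"
    by (auto simp: SpWrC2_def)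
  have e: "(if s then tensor_e (f w) else e_tensor (g w)) = (if s' then tensor_e (f' w) else e_tensor (g' w))"
    and t: "(if s then e_tensor (g w) else tensor_e (f w)) = (if s' then e_tensor (g' w) else tensor_e (f' w))"
    for w
    using fun_cong[OF eq, of "e_tensor w"] fun_cong[OF eq, of "tensor_e w"]
    by (simp_all add: pq Phi_e_tensor Phi_tensor_e Sp)
  show "p = q"
  proof (cases "s = s'")
    case True
    then have "f w = f' w" and "g w = g' w" for w
      using e[of w] t[of w] by (auto simp: e_tensor_eq_iff tensor_e_eq_iff split: if_splits)
    with True show ?thesis
      by (simp add: pq fun_eq_iff)
  next
    case False
    then have "f (1, 0) = (0, 0)"
      using e[of "(1, 0)"] t[of "(1, 0)"]
      by (auto simp: e_tensor_eq_tensor_e_iff tensor_e_eq_e_tensor_iff split: if_splits)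
    with Sp_apply_x_nonzero[OF Sp(1)] show ?thesis
      by contradiction
  qed
qed

section \<open>Automorphisms fix \<open>1\<close>, \<open>p\<^sub>1\<close> and \<open>z\<close>\<close>

lemma is_aut_k10D:
  assumes "is_aut_k10 \<phi>"
  shows "bij \<phi>"
    and "\<phi> (k10_add u v) = k10_add (\<phi> u) (\<phi> v)"
    and "\<phi> (k10_scale t u) = k10_scale t (\<phi> u)"
    and "\<phi> (k10_mult u v) = k10_mult (\<phi> u) (\<phi> v)"
    and "k10_even u \<Longrightarrow> k10_even (\<phi> u)"
    and "k10_odd u \<Longrightarrow> k10_odd (\<phi> u)"
  using assms unfolding is_aut_k10_def by blast+

abbreviation k10_one :: "'a::field k10" where
  "k10_one \<equiv> k10_vec 1 0 0 0 0 0 0 0 0 0"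

abbreviation k10_zero :: "'a::field k10" where
  "k10_zero \<equiv> k10_vec 0 0 0 0 0 0 0 0 0 0"

lemma is_aut_k10_one:
  assumes "is_aut_k10 \<phi>"
  shows "\<phi> k10_one = k10_one"
proof -
  have one_mult: "k10_mult k10_one u = u" and mult_one: "k10_mult u k10_one = u" for u :: "'a k10"
    by (cases u rule: k10_vec_cases; simp add: k10_mult_vec)+
  obtain v where v: "\<phi> v = k10_one"
    using bij_pointE[OF is_aut_k10D(1)[OF assms]] by metis
  have "\<phi> k10_one = k10_mult (\<phi> k10_one) (\<phi> v)"
    by (simp add: v mult_one)
  also have "\<dots> = \<phi> (k10_mult k10_one v)"
    by (simp only: is_aut_k10D(4)[OF assms])
  finally show ?thesis
    by (simp only: one_mult v)
qed

lemma is_aut_k10_zero: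
  assumes "is_aut_k10 \<phi>"
  shows "\<phi> k10_zero = k10_zero"
proof -
  have zero: "k10_scale 0 u = k10_zero" for u :: "'a k10"
    by (cases u rule: k10_vec_cases) (simp add: k10_scale_vec)
  show ?thesis
    using is_aut_k10D(3)[OF assms, of 0 k10_zero] by (simp only: zero)
qed

lemma is_aut_k10_odd_imageD:
  assumes aut: "is_aut_k10 \<phi>" and odd: "k10_odd (\<phi> u)"
  shows "k10_odd u"
proof -
  obtain c ee ex ey xe xx xy ye yx yy where u: "u = k10_vec c ee ex ey xe xx xy ye yx yy"
    by (rule k10_vec_cases)
  define u0 where "u0 = k10_vec c ee 0 0 0 xx xy 0 yx yy"
  define u1 where "u1 = k10_vec 0 0 ex ey xe 0 0 ye 0 0"
  have "u0 = k10_add u (k10_scale (-1) u1)"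
    by (simp add: u u0_def u1_def k10_add_vec k10_scale_vec)
  then have "\<phi> u0 = k10_add (\<phi> u) (k10_scale (-1) (\<phi> u1))"
    by (simp add: is_aut_k10D[OF aut])
  moreover have "k10_odd (\<phi> u1)" and "k10_even (\<phi> u0)"
    by (simp_all add: is_aut_k10D[OF aut] u0_def u1_def k10_odd_vec k10_even_vec)
  ultimately have "\<phi> u0 = \<phi> k10_zero"
    using odd
    by (cases "\<phi> u" rule: k10_vec_cases; cases "\<phi> u1" rule: k10_vec_cases)
      (simp add: is_aut_k10_zero[OF aut] k10_add_vec k10_scale_vec k10_odd_vec k10_even_vec)
  then have "u0 = k10_zero"
    using is_aut_k10D(1)[OF aut] by (simp add: bij_is_inj inj_eq)
  then show ?thesis
    by (simp add: u u0_def k10_vec_eq_iff k10_odd_vec)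
qed

lemma powers_of_two_nonzero:
  assumes "(2::'a::field) \<noteq> 0"
  shows "(4::'a) \<noteq> 0" and "(8::'a) \<noteq> 0" and "(16::'a) \<noteq> 0" and "(32::'a) \<noteq> 0"
    and "(64::'a) \<noteq> 0"
proof -
  have "(2::'a) ^ n \<noteq> 0" for n
    using assms by simp
  from this[of 2] this[of 3] this[of 4] this[of 5] this[of 6]
  show "(4::'a) \<noteq> 0" "(8::'a) \<noteq> 0" "(16::'a) \<noteq> 0" "(32::'a) \<noteq> 0" "(64::'a) \<noteq> 0"
    by simp_all
qed

definition k10_p1 :: "'a::field k10" where
  "k10_p1 = k10_vec (- 1/2) 2 0 0 0 0 0 0 0 0"

definition k10_p2 :: "'a::field k10" where
  "k10_p2 = k10_vec (3/2) (- 2) 0 0 0 0 0 0 0 0"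

lemma k10_p1_mult_odd:
  assumes "(2::'a::field) \<noteq> 0" and "k10_odd (v :: 'a k10)"
  shows "k10_mult k10_p1 v = k10_scale (1/2) v"
  using assms by (cases v rule: k10_vec_cases) (simp add: k10_p1_def k10_odd_vec k10_mult_vec k10_scale_vec k10_vec_eq_iff)

lemma k10_even_idempotent_cases:
  assumes two: "(2::'a::field) \<noteq> 0" and even: "k10_even (u :: 'a k10)"
    and idem: "k10_mult u u = u"
    and half: "k10_mult u (e_tensor (1, 0)) = k10_scale (1/2) (e_tensor (1, 0))"
      "k10_mult u (e_tensor (0, 1)) = k10_scale (1/2) (e_tensor (0, 1))"
  shows "u = k10_p1 \<or> u = k10_p2"
proof -
  obtain c ee ex ey xe xx xy ye yx yy where u: "u = k10_vec c ee ex ey xe xx xy ye yx yy"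
    by (rule k10_vec_cases)
  have odd0: "ex = 0" "ey = 0" "xe = 0" "ye = 0"
    using even by (simp_all add: u k10_even_vec)
  have c_ee: "c + ee / 2 = 1/2" and W0: "xx = 0" "xy = 0" "yx = 0" "yy = 0"
    using half two by (simp_all add: u odd0 e_tensor_def k10_mult_vec k10_scale_vec k10_vec_eq_iff)
  then have "2 * (c + ee / 2) = 2 * (1 / 2)"
    by (simp only:)
  then have "ee + 2 * c = 1"
    using two by (simp add: distrib_left add.commute)
  then have ee: "ee = 1 - 2 * c"
    by (simp add: eq_diff_eq)
  have "c * c - 3/16 * ee * ee = c"
    using idem by (simp add: u odd0 W0 k10_mult_vec k10_vec_eq_iff)
  then have "(2 * c - 3) * (2 * c + 1) = 0"
    using powers_of_two_nonzero[OF two] by (simp add: ee field_simps)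
  then consider "2 * c = 3" | "2 * c = - 1"
    by (auto simp: eq_neg_iff_add_eq_0)
  then show ?thesis
  proof cases
    case 1
    then have c: "c = 3/2" and ee: "ee = - 2"
      using two by (simp_all add: ee field_simps)
    show ?thesis
      unfolding u odd0 W0 c ee by (simp add: k10_p1_def k10_p2_def)
  next
    case 2
    then have c: "c = - 1/2" and ee: "ee = 2"
      using two by (simp_all add: ee field_simps)
    show ?thesis
      unfolding u odd0 W0 c ee by (simp add: k10_p1_def k10_p2_def)
  qed
qed

lemma k10_p2_even_annihilator:
  assumes two: "(2::'a::field) \<noteq> 0" and "k10_even (w :: 'a k10)"
    and "k10_mult k10_p2 w = k10_zero"
  shows "\<exists>t. w = k10_scale t k10_p1"
proof -
  obtain c ee ex ey xe xx xy ye yx yy where w: "w = k10_vec c ee ex ey xe xx xy ye yx yy"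
    by (rule k10_vec_cases)
  have "ex = 0" "ey = 0" "xe = 0" "ye = 0"
    using assms(2) by (simp_all add: w k10_even_vec)
  then have "k10_mult k10_p2 w = k10_vec (3/2 * c + 3/8 * ee) (- ee / 2 - 2 * c) 0 0 0 xx xy 0 yx yy"
    using two powers_of_two_nonzero[OF two]
    by (simp add: w k10_p2_def k10_mult_vec k10_vec_eq_iff field_simps)
  then have "xx = 0" "xy = 0" "yx = 0" "yy = 0" "ee = - 4 * c"
    using assms(3) two by (simp_all add: k10_vec_eq_iff field_simps)
  with \<open>ex = 0\<close> \<open>ey = 0\<close> \<open>xe = 0\<close> \<open>ye = 0\<close> have "w = k10_scale (- 2 * c) k10_p1"
    using two by (simp add: w k10_p1_def k10_scale_vec k10_vec_eq_iff)
  then show ?thesis ..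
qed

lemma is_aut_k10_p1_cases:
  assumes two: "(2::'a::field) \<noteq> 0" and aut: "is_aut_k10 (\<phi> :: 'a k10 \<Rightarrow> 'a k10)"
  shows "\<phi> k10_p1 = k10_p1 \<or> \<phi> k10_p1 = k10_p2"
proof (rule k10_even_idempotent_cases[OF two])
  note \<phi> = is_aut_k10D[OF aut]
  have "k10_mult k10_p1 k10_p1 = (k10_p1 :: 'a k10)"
    using two powers_of_two_nonzero[OF two]
    by (simp add: k10_p1_def k10_mult_vec k10_vec_eq_iff field_simps)
  then show "k10_mult (\<phi> k10_p1) (\<phi> k10_p1) = \<phi> k10_p1"
    by (simp flip: \<phi>(4))
  show "k10_even (\<phi> k10_p1)"
    by (simp add: \<phi>(5) k10_p1_def k10_even_vec)
  have half: "k10_mult (\<phi> k10_p1) w = k10_scale (1/2) w" if "k10_odd w" for w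
  proof -
    obtain v where v: "w = \<phi> v"
      using bij_pointE[OF \<phi>(1)] by metis
    then have "k10_odd v"
      using is_aut_k10_odd_imageD[OF aut] that by simp
    then have "k10_mult k10_p1 v = k10_scale (1/2) v"
      by (rule k10_p1_mult_odd[OF two])
    then show ?thesis
      by (metis v \<phi>(3,4))
  qed
  show "k10_mult (\<phi> k10_p1) (e_tensor (1, 0)) = k10_scale (1/2) (e_tensor (1, 0))"
    and "k10_mult (\<phi> k10_p1) (e_tensor (0, 1)) = k10_scale (1/2) (e_tensor (0, 1))"
    by (simp_all add: half e_tensor_def k10_odd_vec)
qed

lemma is_aut_k10_p1_neq_p2:
  assumes two: "(2::'a::field) \<noteq> 0" and aut: "is_aut_k10 (\<phi> :: 'a k10 \<Rightarrow> 'a k10)"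
  shows "\<phi> k10_p1 \<noteq> k10_p2"
proof
  note \<phi> = is_aut_k10D[OF aut]
  assume p2: "\<phi> k10_p1 = k10_p2"
  have p2_eq: "(k10_p2 :: 'a k10) = k10_add k10_one (k10_scale (- 1) k10_p1)"
    using two by (simp add: k10_p1_def k10_p2_def k10_add_vec k10_scale_vec k10_vec_eq_iff field_simps)
  have "\<phi> k10_p2 = k10_add (\<phi> k10_one) (k10_scale (- 1) (\<phi> k10_p1))"
    by (subst p2_eq) (simp only: \<phi>(2,3))
  also have "\<dots> = k10_add k10_one (k10_scale (- 1) k10_p2)"
    by (simp only: p2 is_aut_k10_one[OF aut])
  also have "\<dots> = k10_p1"
    using two by (simp add: k10_p1_def k10_p2_def k10_add_vec k10_scale_vec k10_vec_eq_iff field_simps)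
  finally have p2': "\<phi> k10_p2 = k10_p1" .
  define xx :: "'a k10" where "xx = k10_vec 0 0 0 0 0 1 0 0 0 0"
  have "k10_mult k10_p1 xx = k10_zero"
    using two powers_of_two_nonzero[OF two]
    by (simp add: xx_def k10_p1_def k10_mult_vec k10_vec_eq_iff field_simps)
  then have "k10_mult k10_p2 (\<phi> xx) = k10_zero"
    by (metis \<phi>(4) p2 is_aut_k10_zero[OF aut])
  moreover have "k10_even (\<phi> xx)"
    by (simp add: \<phi>(5) xx_def k10_even_vec)
  ultimately obtain t where "\<phi> xx = k10_scale t k10_p1"
    using k10_p2_even_annihilator[OF two] by blast
  then have "\<phi> xx = \<phi> (k10_scale t k10_p2)"
    by (simp add: \<phi>(3) p2')
  then have "xx = k10_scale t k10_p2"
    using \<phi>(1) by (simp add: bij_is_inj inj_eq)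
  then show False
    by (simp add: xx_def k10_p2_def k10_scale_vec k10_vec_eq_iff)
qed

lemma is_aut_k10_p1:
  assumes "(2::'a::field) \<noteq> 0" and "is_aut_k10 (\<phi> :: 'a k10 \<Rightarrow> 'a k10)"
  shows "\<phi> k10_p1 = k10_p1"
  using is_aut_k10_p1_cases[OF assms] is_aut_k10_p1_neq_p2[OF assms] by blast

definition k10_z :: "'a::field k10" where
  "k10_z = k10_vec (- 3/8) 1 0 0 0 0 0 0 0 0"

lemma is_aut_k10_z:
  assumes two: "(2::'a::field) \<noteq> 0" and aut: "is_aut_k10 (\<phi> :: 'a k10 \<Rightarrow> 'a k10)"
  shows "\<phi> k10_z = k10_z"
proof -
  have z: "(k10_z :: 'a k10) = k10_add (k10_scale (1/2) k10_p1) (k10_scale (- 1/8) k10_one)"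
    using two powers_of_two_nonzero[OF two]
    by (simp add: k10_z_def k10_p1_def k10_add_vec k10_scale_vec k10_vec_eq_iff field_simps)
  have "\<phi> k10_z = k10_add (k10_scale (1/2) (\<phi> k10_p1)) (k10_scale (- 1/8) (\<phi> k10_one))"
    by (subst z) (simp only: is_aut_k10D(2,3)[OF aut])
  also have "\<dots> = k10_z"
    by (simp only: z is_aut_k10_p1[OF two aut] is_aut_k10_one[OF aut])
  finally show ?thesis .
qed

section \<open>Surjectivity of \<open>\<Phi>\<close>\<close>

lemma k10_mult_odd:
  "k10_mult (k10_add (e_tensor v) (tensor_e w)) (k10_add (e_tensor v') (tensor_e w')) =
    k10_vec (- 3/8 * (wform v v' + wform w w')) (wform v v' + wform w w') 0 0 0
      ((fst v' * fst w - fst v * fst w') / 4) ((snd v' * fst w - snd v * fst w') / 4) 0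
      ((fst v' * snd w - fst v * snd w') / 4) ((snd v' * snd w - snd v * snd w') / 4)"
  by (simp add: e_tensor_def tensor_e_def k10_add_vec k10_mult_vec k10_vec_eq_iff wform_def
      algebra_simps diff_divide_distrib)

lemma e_tensor_mult: "k10_mult (e_tensor v) (e_tensor w) = k10_scale (wform v w) k10_z"
  by (simp add: e_tensor_def k10_z_def k10_mult_vec k10_scale_vec k10_vec_eq_iff wform_def algebra_simps)

lemma tensor_e_mult: "k10_mult (tensor_e v) (tensor_e w) = k10_scale (wform v w) k10_z"
  by (simp add: tensor_e_def k10_z_def k10_mult_vec k10_scale_vec k10_vec_eq_iff wform_def algebra_simps)

lemma k10_odd_iff: "k10_odd u \<longleftrightarrow> (\<exists>v w. u = k10_add (e_tensor v) (tensor_e w))"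
proof
  assume odd: "k10_odd u"
  obtain c ee ex ey xe xx xy ye yx yy where u: "u = k10_vec c ee ex ey xe xx xy ye yx yy"
    by (rule k10_vec_cases)
  then have "u = k10_add (e_tensor (ex, ey)) (tensor_e (xe, ye))"
    using odd by (simp add: k10_odd_vec e_tensor_def tensor_e_def k10_add_vec)
  then show "\<exists>v w. u = k10_add (e_tensor v) (tensor_e w)"
    by blast
qed (auto simp: e_tensor_def tensor_e_def k10_add_vec k10_odd_vec)

lemma wform_sum_eq_one_cases:
  fixes v v' w w' :: "'a::field W"
  assumes minors: "fst v' * fst w = fst v * fst w'" "snd v' * fst w = snd v * fst w'"
      "fst v' * snd w = fst v * snd w'" "snd v' * snd w = snd v * snd w'"
    and sum: "wform v v' + wform w w' = 1"
  shows "(w = (0, 0) \<and> w' = (0, 0) \<and> wform v v' = 1) \<or> (v = (0, 0) \<and> v' = (0, 0) \<and> wform w w' = 1)"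
proof -
  have "fst w * wform v v' = 0" "snd w * wform v v' = 0"
    "fst w' * wform v v' = 0" "snd w' * wform v v' = 0"
    "fst v * wform w w' = 0" "snd v * wform w w' = 0"
    "fst v' * wform w w' = 0" "snd v' * wform w w' = 0"
    using minors unfolding wform_def by algebra+
  show ?thesis
  proof (cases "wform v v' = 0")
    case True
    with sum have "wform w w' = 1"
      by simp
    with \<open>fst v * wform w w' = 0\<close> \<open>snd v * wform w w' = 0\<close>
      \<open>fst v' * wform w w' = 0\<close> \<open>snd v' * wform w w' = 0\<close>
    show ?thesis
      by (simp add: prod_eq_iff)
  next
    case False
    with \<open>fst w * wform v v' = 0\<close> \<open>snd w * wform v v' = 0\<close>
      \<open>fst w' * wform v v' = 0\<close> \<open>snd w' * wform v v' = 0\<close>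
    have "w = (0, 0)" and "w' = (0, 0)"
      by (simp_all add: prod_eq_iff)
    with sum show ?thesis
      by (simp add: wform_def)
  qed
qed

lemma k10_odd_mult_eq_z_cases:
  assumes two: "(2::'a::field) \<noteq> 0"
    and "k10_odd u" and "k10_odd u'" and "k10_mult u u' = (k10_z :: 'a k10)"
  obtains v v' where "u = e_tensor v" and "u' = e_tensor v'" and "wform v v' = 1"
    | v v' where "u = tensor_e v" and "u' = tensor_e v'" and "wform v v' = 1"
proof -
  obtain v w v' w' where u: "u = k10_add (e_tensor v) (tensor_e w)"
    and u': "u' = k10_add (e_tensor v') (tensor_e w')"
    using assms(2,3) k10_odd_iff by metis
  have "fst v' * fst w = fst v * fst w'" "snd v' * fst w = snd v * fst w'"
    "fst v' * snd w = fst v * snd w'" "snd v' * snd w = snd v * snd w'"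
    and "wform v v' + wform w w' = 1"
    using assms(4) powers_of_two_nonzero[OF two]
    by (simp_all add: u u' k10_mult_odd k10_z_def k10_vec_eq_iff)
  then have "(w = (0, 0) \<and> w' = (0, 0) \<and> wform v v' = 1) \<or> (v = (0, 0) \<and> v' = (0, 0) \<and> wform w w' = 1)"
    by (rule wform_sum_eq_one_cases)
  then consider "w = (0, 0)" "w' = (0, 0)" "wform v v' = 1" | "v = (0, 0)" "v' = (0, 0)" "wform w w' = 1"
    by blast
  then show ?thesis
  proof cases
    case 1
    then show ?thesis
      using that(1)[of v v'] by (simp add: u u' e_tensor_def tensor_e_def k10_add_vec)
  next
    case 2
    then show ?thesis
      using that(2)[of w w'] by (simp add: u u' e_tensor_def tensor_e_def k10_add_vec)
  qed
qed

lemma is_aut_k10_mixed_product_neq_z: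
  assumes two: "(2::'a::field) \<noteq> 0" and aut: "is_aut_k10 (\<phi> :: 'a k10 \<Rightarrow> 'a k10)"
  shows "k10_mult (\<phi> (e_tensor (1, 0))) (\<phi> (tensor_e (1, 0))) \<noteq> k10_scale t k10_z"
proof
  assume "k10_mult (\<phi> (e_tensor (1, 0))) (\<phi> (tensor_e (1, 0))) = k10_scale t k10_z"
  then have "\<phi> (k10_mult (e_tensor (1, 0)) (tensor_e (1, 0))) = \<phi> (k10_scale t k10_z)"
    by (simp add: is_aut_k10D(3,4)[OF aut] is_aut_k10_z[OF two aut])
  then have "k10_mult (e_tensor (1, 0)) (tensor_e (1, 0)) = k10_scale t k10_z"
    using is_aut_k10D(1)[OF aut] by (simp add: bij_is_inj inj_eq)
  then show False
    using powers_of_two_nonzero[OF two]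
    by (simp add: e_tensor_def tensor_e_def k10_z_def k10_mult_vec k10_scale_vec k10_vec_eq_iff)
qed

lemma is_aut_k10_eqI:
  assumes two: "(2::'a::field) \<noteq> 0"
    and aut: "is_aut_k10 (\<phi> :: 'a k10 \<Rightarrow> 'a k10)" "is_aut_k10 \<psi>"
    and gens: "\<phi> (e_tensor (1, 0)) = \<psi> (e_tensor (1, 0))" "\<phi> (e_tensor (0, 1)) = \<psi> (e_tensor (0, 1))"
      "\<phi> (tensor_e (1, 0)) = \<psi> (tensor_e (1, 0))" "\<phi> (tensor_e (0, 1)) = \<psi> (tensor_e (0, 1))"
  shows "\<phi> = \<psi>"
proof
  note \<phi> = is_aut_k10D[OF aut(1)] and \<psi> = is_aut_k10D[OF aut(2)]
  have one: "\<phi> k10_one = \<psi> k10_one"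
    by (simp add: is_aut_k10_one aut)
  have add: "\<phi> (k10_add a b) = \<psi> (k10_add a b)"
    and mult: "\<phi> (k10_mult a b) = \<psi> (k10_mult a b)"
    if "\<phi> a = \<psi> a" "\<phi> b = \<psi> b" for a b
    using that by (simp_all add: \<phi>(2,4) \<psi>(2,4))
  have scale: "\<phi> (k10_scale t a) = \<psi> (k10_scale t a)" if "\<phi> a = \<psi> a" for t a
    using that by (simp add: \<phi>(3) \<psi>(3))
  fix u :: "'a k10"
  obtain c ee ex ey xe xx xy ye yx yy where u: "u = k10_vec c ee ex ey xe xx xy ye yx yy"
    by (rule k10_vec_cases)
  let ?x = "(1, 0) :: 'a W" and ?y = "(0, 1) :: 'a W"
  have "u = k10_add (k10_scale c k10_one)
    (k10_add (k10_scale ee (k10_add (k10_mult (e_tensor ?x) (e_tensor ?y)) (k10_scale (3/8) k10_one)))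
    (k10_add (k10_scale ex (e_tensor ?x)) (k10_add (k10_scale ey (e_tensor ?y))
    (k10_add (k10_scale xe (tensor_e ?x)) (k10_add (k10_scale ye (tensor_e ?y))
    (k10_add (k10_scale (4 * xx) (k10_mult (tensor_e ?x) (e_tensor ?x)))
    (k10_add (k10_scale (4 * xy) (k10_mult (tensor_e ?x) (e_tensor ?y)))
    (k10_add (k10_scale (4 * yx) (k10_mult (tensor_e ?y) (e_tensor ?x)))
    (k10_scale (4 * yy) (k10_mult (tensor_e ?y) (e_tensor ?y)))))))))))"
    using powers_of_two_nonzero[OF two]
    by (simp add: u e_tensor_def tensor_e_def k10_add_vec k10_scale_vec k10_mult_vec k10_vec_eq_iff)
  also have "\<phi> \<dots> = \<psi> \<dots>"
    by (intro add scale mult one gens)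
  finally show "\<phi> u = \<psi> u"
    by simp
qed

lemma Sp_basis_imagesE:
  assumes "wform v w = 1"
  obtains h where "h \<in> Sp" and "h (1, 0) = v" and "h (0, 1) = w"
proof
  show "lin2 (fst v) (fst w) (snd v) (snd w) \<in> Sp"
    using assms by (intro lin2_in_Sp) (simp add: wform_def mult.commute)
qed (simp_all add: lin2_apply)

lemma is_aut_k10_in_Phi_image:
  assumes two: "(2::'a::field) \<noteq> 0" and aut: "is_aut_k10 (\<phi> :: 'a k10 \<Rightarrow> 'a k10)"
    and "wform f1 f2 = 1" and "wform g1 g2 = 1"
    and "\<phi> (e_tensor (1, 0)) = (if s then tensor_e f1 else e_tensor g1)"
      "\<phi> (e_tensor (0, 1)) = (if s then tensor_e f2 else e_tensor g2)"
      "\<phi> (tensor_e (1, 0)) = (if s then e_tensor g1 else tensor_e f1)"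
      "\<phi> (tensor_e (0, 1)) = (if s then e_tensor g2 else tensor_e f2)"
  shows "\<phi> \<in> Phi ` carrier SpWrC2"
proof -
  obtain f where f: "f \<in> Sp" "f (1, 0) = f1" "f (0, 1) = f2"
    using assms(3) by (rule Sp_basis_imagesE)
  obtain g where g: "g \<in> Sp" "g (1, 0) = g1" "g (0, 1) = g2"
    using assms(4) by (rule Sp_basis_imagesE)
  have p: "(f, g, s) \<in> carrier SpWrC2"
    using f g by (simp add: SpWrC2_def)
  have "Phi (f, g, s) = \<phi>"
    using f g assms(5-8)
    by (intro is_aut_k10_eqI[OF two Phi_is_aut_k10[OF p] aut]) (simp_all add: Phi_e_tensor Phi_tensor_e)
  with p show ?thesis
    by blast
qed

lemma Phi_surj:
  assumes two: "(2::'a::field) \<noteq> 0" and aut: "is_aut_k10 (\<phi> :: 'a k10 \<Rightarrow> 'a k10)"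
  shows "\<phi> \<in> Phi ` carrier SpWrC2"
proof -
  let ?x = "(1, 0) :: 'a W" and ?y = "(0, 1) :: 'a W"
  have odd: "k10_odd (\<phi> (e_tensor w))" "k10_odd (\<phi> (tensor_e w))" for w
    by (simp_all add: is_aut_k10D(6)[OF aut] e_tensor_def tensor_e_def k10_odd_vec)
  have "k10_mult (\<phi> (e_tensor ?x)) (\<phi> (e_tensor ?y)) = k10_z"
    and "k10_mult (\<phi> (tensor_e ?x)) (\<phi> (tensor_e ?y)) = k10_z"
    using is_aut_k10_z[OF two aut]
    by (simp_all add: e_tensor_mult tensor_e_mult wform_def k10_z_def k10_scale_vec
        flip: is_aut_k10D(4)[OF aut])
  note cases_e = k10_odd_mult_eq_z_cases[OF two odd(1) odd(1) this(1)]
    and cases_t = k10_odd_mult_eq_z_cases[OF two odd(2) odd(2) this(2)]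
  note mixed = is_aut_k10_mixed_product_neq_z[OF two aut]
  show ?thesis
  proof (rule cases_e; rule cases_t)
    fix g1 g2 f1 f2
    assume "\<phi> (e_tensor ?x) = e_tensor g1" "\<phi> (e_tensor ?y) = e_tensor g2" "wform g1 g2 = 1"
      and "\<phi> (tensor_e ?x) = tensor_e f1" "\<phi> (tensor_e ?y) = tensor_e f2" "wform f1 f2 = 1"
    then show ?thesis
      by (intro is_aut_k10_in_Phi_image[OF two aut, where s = False]) simp_all
  next
    fix f1 f2 g1 g2
    assume "\<phi> (e_tensor ?x) = tensor_e f1" "\<phi> (e_tensor ?y) = tensor_e f2" "wform f1 f2 = 1"
      and "\<phi> (tensor_e ?x) = e_tensor g1" "\<phi> (tensor_e ?y) = e_tensor g2" "wform g1 g2 = 1"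
    then show ?thesis
      by (intro is_aut_k10_in_Phi_image[OF two aut, where s = True]) simp_all
  next
    fix v v' w w'
    assume "\<phi> (e_tensor ?x) = e_tensor v" and "\<phi> (tensor_e ?x) = e_tensor w"
    then show ?thesis
      using mixed[of "wform v w"] by (simp add: e_tensor_mult)
  next
    fix v v' w w'
    assume "\<phi> (e_tensor ?x) = tensor_e v" and "\<phi> (tensor_e ?x) = tensor_e w"
    then show ?thesis
      using mixed[of "wform v w"] by (simp add: tensor_e_mult)
  qed
qed

theorem theorem3p3:
  assumes "(2::'a::field) \<noteq> 0" and "(3::'a) \<noteq> 0"
    and "\<forall>a::'a. \<exists>b. a = b * b"
  shows "(Phi :: ('a W \<Rightarrow> 'a W) \<times> ('a W \<Rightarrow> 'a W) \<times> bool \<Rightarrow> 'a k10 \<Rightarrow> 'a k10)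
           \<in> iso SpWrC2 Aut_K10"
proof -
  have "Phi \<in> hom SpWrC2 (Aut_K10 :: ('a k10 \<Rightarrow> 'a k10) monoid)"
    by (rule homI) (simp_all add: Aut_K10_def SpWrC2_def Phi_is_aut_k10 Phi_wreath_mult)
  moreover have "Phi ` carrier SpWrC2 = carrier (Aut_K10 :: ('a k10 \<Rightarrow> 'a k10) monoid)"
    using Phi_is_aut_k10 Phi_surj[OF assms(1)] by (auto simp: Aut_K10_def)
  ultimately show ?thesis
    using inj_on_Phi by (simp add: iso_def bij_betw_def)
qed

end
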